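(* Let $k\ge 2$ and $l=2^{k-1}$. Then: (a),(b) the sequence $(d_n(k))_{n\ge k+1}$ is periodic with least period exactly $l$, i.e. $d_{n+l}(k)=d_n(k)$ for all $n\ge k+1$ and no smaller positive integer has this property; (c) $d_{n+l/2}(k)-d_n(k)\in\{5,-5\}$ for all $n\ge k+1$; (d) for each digit $j\in\{0,\dots,9\}$, the number of indices $i\in\{k+1,k+2,\dots,k+l\}$ with $d_i(k)=j$ equals the $j$-th component of the vector $A^{k-1}u\in\mathbb{Z}^{10}$, where components are indexed $0,\dots,9$, $A$ is the $10\times10$ matrix with rows and columns indexed by $0,\dots,9$ given by $A_{ij}=1$ if $\lfloor j/2\rfloor\equiv i\pmod 5$ and $A_{ij}=0$ otherwise (so row $i$ has ones exactly in columns $2(i\bmod 5)$ and $2(i\bmod 5)+1$), and $u$ is the vector whose component $2$ equals $1$ and all other components equal $0$.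
   Context: For integers $n\ge0$ and $k\ge0$, $d_n(k)\in\{0,\dots,9\}$ denotes the $k$-th decimal digit of $5^n$ counted from the right starting at $k=0$, i.e. $5^n=\sum_{k\ge0} d_n(k)10^k$ (with $d_n(k)=0$ for $k$ beyond the length of $5^n$). *)

theory Defs
  imports Main
begin

definition d :: "nat \<Rightarrow> nat \<Rightarrow> nat" where
  "d n k = (5 ^ n div 10 ^ k) mod 10"

definition matA :: "nat \<Rightarrow> nat \<Rightarrow> int" where
  "matA i j = (if (j div 2) mod 5 = i mod 5 then 1 else 0)"

definition matvec :: "(nat \<Rightarrow> nat \<Rightarrow> int) \<Rightarrow> (nat \<Rightarrow> int) \<Rightarrow> (nat \<Rightarrow> int)" where
  "matvec M v = (\<lambda>i. \<Sum>j<10. M i j * v j)"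

definition vecU :: "nat \<Rightarrow> int" where
  "vecU j = (if j = 2 then 1 else 0)"

end

theory Submission
  imports Defs "HOL-Computational_Algebra.Primes"
begin

text \<open>Induction on \<open>m\<close> gives \<open>5^(2^m) = 1 + 2^(m+2) t\<close> with \<open>t\<close> odd. Hence for \<open>k = m + 2\<close>
  and \<open>n > k\<close> we get \<open>5^(n + 2^m) = 5^n + 10^k Q\<close> with \<open>Q\<close> an odd multiple of 5, so adding
  \<open>2^(k-2)\<close> to the exponent adds 5 to the \<open>k\<close>-th digit modulo 10. This gives the period
  \<open>2^(k-1)\<close> and the jump by \<open>\<plusminus>5\<close> at half period; since periods are closed under gcd, a
  smaller period would make \<open>2^(k-2)\<close> a period, which that jump forbids.
  For the counts, \<open>5^(n+1) div 10^(k+1) = 5^n div (2 \<cdot> 10^k)\<close> gives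
  \<open>d (n+1) (k+1) mod 5 = d n k div 2\<close>. The two halves of a period window at position \<open>k+1\<close>
  carry the digits \<open>x\<close> and \<open>(x + 5) mod 10\<close>, exactly one of which is \<open>j\<close> iff
  \<open>x mod 5 = j mod 5\<close>; so digit \<open>j\<close> occurs at position \<open>k+1\<close> as often as the digits
  \<open>2(j mod 5)\<close> and \<open>2(j mod 5)+1\<close> at position \<open>k\<close> together, which is one application of \<open>A\<close>.\<close>

definition periodic_from :: "nat \<Rightarrow> (nat \<Rightarrow> 'a) \<Rightarrow> nat \<Rightarrow> bool" where
  "periodic_from N f p \<longleftrightarrow> (\<forall>n\<ge>N. f (n + p) = f n)"

lemma periodic_from_add:
  assumes "periodic_from N f p" "periodic_from N f q"
  shows "periodic_from N f (p + q)"
  using assms unfolding periodic_from_def by (metis add.assoc le_add1 order_trans)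

lemma periodic_from_mult:
  assumes "periodic_from N f p"
  shows "periodic_from N f (c * p)"
proof (induction c)
  case 0
  show ?case by (simp add: periodic_from_def)
next
  case (Suc c)
  then show ?case using periodic_from_add[OF assms] by simp
qed

lemma periodic_from_dvd:
  assumes "periodic_from N f p" "p dvd q"
  shows "periodic_from N f q"
  using assms periodic_from_mult by (metis dvd_def mult.commute)

lemma periodic_from_diff:
  assumes "periodic_from N f p" "periodic_from N f (p + q)"
  shows "periodic_from N f q"
  using assms unfolding periodic_from_def by (metis add.commute add.left_commute le_add2 order_trans)

lemma periodic_from_gcd:
  assumes p: "periodic_from N f p" and q: "periodic_from N f q"
  shows "periodic_from N f (gcd p q)"
proof (cases "p = 0")
  case True
  then show ?thesis using q by simp
next
  case False
  then obtain x y where "p * x = q * y + gcd p q" using bezout_nat by blast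
  then show ?thesis
    using periodic_from_diff periodic_from_mult[OF p, of x] periodic_from_mult[OF q, of y]
    by (metis mult.commute)
qed

lemma five_pow_two_pow: "\<exists>t. odd t \<and> (5::nat) ^ 2 ^ m = 1 + 2 ^ (m + 2) * t"
proof (induction m)
  case 0
  show ?case by (rule exI[of _ 1]) simp
next
  case (Suc m)
  then obtain t where t: "odd t" "(5::nat) ^ 2 ^ m = 1 + 2 ^ (m + 2) * t" by blast
  have "(5::nat) ^ 2 ^ Suc m = (5 ^ 2 ^ m)\<^sup>2" by (simp add: power_mult[symmetric] mult.commute)
  also have "\<dots> = 1 + 2 ^ (Suc m + 2) * (t + 2 ^ (m + 1) * t\<^sup>2)"
    unfolding t(2) by (simp add: power_add power2_eq_square algebra_simps)
  finally show ?case using t(1) by (intro exI[of _ "t + 2 ^ (m + 1) * t\<^sup>2"]) simp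
qed

lemma digit_add_pow10_mult: "((m::nat) + 10 ^ k * q) div 10 ^ k mod 10 = (m div 10 ^ k + q) mod 10"
  by (simp add: add.commute)

lemma d_less_10: "d n k < 10"
  by (simp add: d_def)

lemma five_pow_add_two_pow:
  assumes "n > k + 2"
  obtains Q where "Q mod 10 = 5" "(5::nat) ^ (n + 2 ^ k) = 5 ^ n + 10 ^ (k + 2) * Q"
proof -
  obtain t where t: "odd t" "(5::nat) ^ 2 ^ k = 1 + 2 ^ (k + 2) * t"
    using five_pow_two_pow by blast
  have "k + 2 + (n - (k + 2)) = n" using assms by simp
  then have split: "(5::nat) ^ n = 5 ^ (k + 2) * 5 ^ (n - (k + 2))"
    by (simp only: power_add[symmetric])
  have "(5::nat) ^ (n + 2 ^ k) = 5 ^ n + 5 ^ n * 2 ^ (k + 2) * t"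
    by (simp add: power_add t(2) algebra_simps)
  also have "5 ^ n * 2 ^ (k + 2) * t = (5 ^ (k + 2) * 2 ^ (k + 2)) * (5 ^ (n - (k + 2)) * t)"
    unfolding split by (simp only: ac_simps)
  also have "(5::nat) ^ (k + 2) * 2 ^ (k + 2) = 10 ^ (k + 2)"
    by (simp flip: power_mult_distrib)
  finally have pow: "(5::nat) ^ (n + 2 ^ k) = 5 ^ n + 10 ^ (k + 2) * (5 ^ (n - (k + 2)) * t)" .
  have "odd (5 ^ (n - (k + 2)) * t)" "5 dvd (5 ^ (n - (k + 2)) * t)"
    using t(1) assms by simp_all
  then have "(5 ^ (n - (k + 2)) * t) mod 10 = 5" by presburger
  then show ?thesis using pow by (rule that)
qed

lemma d_add_half_period:
  assumes "n > k + 2"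
  shows "d (n + 2 ^ k) (k + 2) = (d n (k + 2) + 5) mod 10"
proof -
  obtain Q where Q: "Q mod 10 = 5" and pow: "(5::nat) ^ (n + 2 ^ k) = 5 ^ n + 10 ^ (k + 2) * Q"
    using five_pow_add_two_pow[OF assms] .
  have "d (n + 2 ^ k) (k + 2) = (5 ^ n div 10 ^ (k + 2) + Q) mod 10"
    unfolding d_def pow digit_add_pow10_mult ..
  also have "\<dots> = (5 ^ n div 10 ^ (k + 2) + 5) mod 10"
    by (metis Q mod_add_right_eq)
  also have "\<dots> = (d n (k + 2) + 5) mod 10"
    unfolding d_def by (rule mod_add_left_eq[symmetric])
  finally show ?thesis .
qed

lemma add_5_mod_10:
  fixes x :: nat
  assumes "x < 10"
  shows "(x + 5) mod 10 = (if x < 5 then x + 5 else x - 5)"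
  using assms by (simp add: mod_if)

lemma add_5_mod_10_neq:
  fixes x :: nat
  assumes "x < 10"
  shows "(x + 5) mod 10 \<noteq> x"
  using assms by (auto simp: add_5_mod_10)

lemma add_5_mod_10_eq_iff_mod_5_eq:
  fixes x j :: nat
  assumes "x < 10" "j < 10"
  shows "x = j \<or> (x + 5) mod 10 = j \<longleftrightarrow> x mod 5 = j mod 5"
proof -
  have mod5: "n mod 5 = (if n < 5 then n else n - 5)" if "n < 10" for n :: nat
    using that by (simp add: mod_if)
  show ?thesis
    using assms by (simp add: mod5 add_5_mod_10) arith
qed

lemma of_bool_add_of_bool_eq:
  assumes "\<not> (P \<and> Q)" "\<not> (R \<and> S)" "P \<or> Q \<longleftrightarrow> R \<or> S"
  shows "of_bool P + of_bool Q = (of_bool R + of_bool S :: 'a::semiring_1)"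
  using assms by auto

lemma d_period:
  assumes "n > k + 2"
  shows "d (n + 2 ^ (k + 1)) (k + 2) = d n (k + 2)"
proof -
  have "d (n + 2 ^ (k + 1)) (k + 2) = d ((n + 2 ^ k) + 2 ^ k) (k + 2)"
    by (simp add: mult_2 add.assoc)
  also have "\<dots> = ((d n (k + 2) + 5) mod 10 + 5) mod 10"
    using assms d_add_half_period[of k n] d_add_half_period[of k "n + 2 ^ k"] by simp
  also have "\<dots> = d n (k + 2)"
    by (simp add: mod_add_left_eq d_less_10)
  finally show ?thesis .
qed

lemma d_not_periodic_below:
  assumes "0 < p" "p < 2 ^ (k + 1)"
  shows "\<not> periodic_from (k + 3) (\<lambda>n. d n (k + 2)) p"
proof
  let ?f = "\<lambda>n. d n (k + 2)"
  assume "periodic_from (k + 3) ?f p"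
  moreover have "periodic_from (k + 3) ?f (2 ^ (k + 1))"
    using d_period[of k] by (simp add: periodic_from_def)
  ultimately have gcd_period: "periodic_from (k + 3) ?f (gcd p (2 ^ (k + 1)))"
    by (rule periodic_from_gcd)
  obtain i where i: "gcd p (2 ^ (k + 1)) = 2 ^ i"
    using divides_primepow_nat[of 2 _ "k + 1"] by auto
  have "gcd p (2 ^ (k + 1)) \<le> p"
    using assms(1) by (simp add: gcd_le1_nat)
  with assms(2) i have "(2::nat) ^ i < 2 ^ (k + 1)"
    by linarith
  then have "i < k + 1"
    by (rule power_less_imp_less_exp[rotated]) simp
  then have "2 ^ i dvd (2::nat) ^ k"
    by (simp add: le_imp_power_dvd)
  then have "periodic_from (k + 3) ?f (2 ^ k)"
    using periodic_from_dvd[OF gcd_period] i by simp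
  then have "d (k + 3 + 2 ^ k) (k + 2) = d (k + 3) (k + 2)"
    by (simp add: periodic_from_def)
  moreover have "d (k + 3 + 2 ^ k) (k + 2) = (d (k + 3) (k + 2) + 5) mod 10"
    by (rule d_add_half_period) simp
  ultimately have "(d (k + 3) (k + 2) + 5) mod 10 = d (k + 3) (k + 2)"
    by simp
  then show False
    using add_5_mod_10_neq[OF d_less_10] by blast
qed

lemma div_2_mod_5: "(a::nat) div 2 mod 5 = a mod 10 div 2"
  using mod_mult2_eq[of a 2 5] by simp

lemma d_Suc_Suc_mod_5: "d (Suc n) (Suc k) mod 5 = d n k div 2"
proof -
  have "(5::nat) ^ Suc n div 10 ^ Suc k = 5 ^ n div (10 ^ k * 2)"
    using div_mult_mult1[of 5 "5 ^ n" "10 ^ k * 2"] by (simp add: ac_simps)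
  then show ?thesis
    unfolding d_def by (simp add: div_mult2_eq mod_mod_cancel div_2_mod_5)
qed

definition digit_count :: "nat \<Rightarrow> nat \<Rightarrow> nat" where
  "digit_count k j = card {i \<in> {k + 1..k + 2 ^ (k - 1)}. d i k = j}"

lemma card_filter_atLeastAtMost_eq_sum:
  fixes a m :: nat
  shows "card {i \<in> {a + 1..a + m}. P i} = (\<Sum>i<m. of_bool (P (a + 1 + i)))"
proof -
  have "{a + 1..a + m} = {a + 1..<a + 1 + m}" by auto
  then have "card {i \<in> {a + 1..a + m}. P i} = (\<Sum>i\<in>{a + 1..<a + 1 + m}. of_bool (P i))"
    by (simp only: card_eq_sum sum.inter_filter[OF finite_atLeastLessThan] of_bool_def)
  also have "\<dots> = (\<Sum>i<m. of_bool (P (a + 1 + i)))"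
    using sum.shift_bounds_nat_ivl[of "\<lambda>i. of_bool (P i)" 0 "a + 1" m]
    by (simp only: lessThan_atLeast0 add_0 add.commute)
  finally show ?thesis .
qed

lemma sum_lessThan_double:
  fixes f :: "nat \<Rightarrow> 'a::comm_monoid_add"
  shows "(\<Sum>i<h + h. f i) = (\<Sum>i<h. f i + f (i + h))"
proof -
  have "(\<Sum>i<h + h. f i) = (\<Sum>i\<in>{0..<h}. f i) + (\<Sum>i\<in>{h..<h + h}. f i)"
    by (simp only: lessThan_atLeast0 sum.atLeastLessThan_concat le_add1)
  also have "\<dots> = (\<Sum>i<h. f i) + (\<Sum>i<h. f (i + h))"
    using sum.shift_bounds_nat_ivl[of f 0 h h] by (simp add: lessThan_atLeast0)
  finally show ?thesis
    by (simp only: sum.distrib)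
qed

lemma digit_count_recurrence:
  assumes "j < 10"
  shows "digit_count (k + 2) j = digit_count (k + 1) (2 * (j mod 5)) + digit_count (k + 1) (2 * (j mod 5) + 1)"
proof -
  let ?c = "j mod 5"
  have pair: "of_bool (d (k + 2 + 1 + i) (k + 2) = j) + of_bool (d (k + 2 + 1 + (i + 2 ^ k)) (k + 2) = j)
      = of_bool (d (k + 1 + 1 + i) (k + 1) = 2 * ?c) + (of_bool (d (k + 1 + 1 + i) (k + 1) = 2 * ?c + 1) :: nat)"
    for i
  proof -
    let ?x = "d (k + 2 + 1 + i) (k + 2)" and ?y = "d (k + 1 + 1 + i) (k + 1)"
    have "d (k + 2 + 1 + (i + 2 ^ k)) (k + 2) = (?x + 5) mod 10"
      using d_add_half_period[of k "k + 2 + 1 + i"] by (simp add: add.assoc)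
    moreover have "\<not> (?x = j \<and> (?x + 5) mod 10 = j)"
      using add_5_mod_10_neq[OF d_less_10] by blast
    moreover have "?x = j \<or> (?x + 5) mod 10 = j \<longleftrightarrow> ?y div 2 = ?c"
      using add_5_mod_10_eq_iff_mod_5_eq[OF d_less_10 assms, of "k + 2 + 1 + i" "k + 2"]
        d_Suc_Suc_mod_5[of "k + 1 + 1 + i" "k + 1"] by simp
    moreover have "?y div 2 = ?c \<longleftrightarrow> ?y = 2 * ?c \<or> ?y = 2 * ?c + 1"
      by auto
    ultimately show ?thesis
      by (intro of_bool_add_of_bool_eq) simp_all
  qed
  have window: "(2::nat) ^ (k + 2 - 1) = 2 ^ k + 2 ^ k" "(2::nat) ^ (k + 1 - 1) = 2 ^ k"
    by simp_all
  have "digit_count (k + 2) j = (\<Sum>i<2 ^ k + 2 ^ k. of_bool (d (k + 2 + 1 + i) (k + 2) = j))"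
    unfolding digit_count_def window by (rule card_filter_atLeastAtMost_eq_sum)
  also have "\<dots> = (\<Sum>i<2 ^ k. of_bool (d (k + 1 + 1 + i) (k + 1) = 2 * ?c)
      + of_bool (d (k + 1 + 1 + i) (k + 1) = 2 * ?c + 1))"
    unfolding sum_lessThan_double by (simp only: pair)
  also have "\<dots> = digit_count (k + 1) (2 * ?c) + digit_count (k + 1) (2 * ?c + 1)"
    unfolding digit_count_def window card_filter_atLeastAtMost_eq_sum by (rule sum.distrib)
  finally show ?thesis .
qed

lemma matvec_matA: "matvec matA v i = v (2 * (i mod 5)) + v (2 * (i mod 5) + 1)"
proof -
  have "matvec matA v i = (\<Sum>j<10. v j * of_bool ((j div 2) mod 5 = i mod 5))"
    unfolding matvec_def by (rule sum.cong) (simp_all add: matA_def)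
  also have "\<dots> = (\<Sum>j\<in>{2 * (i mod 5), 2 * (i mod 5) + 1}. v j)"
  proof -
    have "{..<10} \<inter> {j. (j div 2) mod 5 = i mod 5} = {2 * (i mod 5), 2 * (i mod 5) + 1}"
      by auto
    then show ?thesis by (simp only: sum_mult_of_bool_eq[OF finite_lessThan])
  qed
  also have "\<dots> = v (2 * (i mod 5)) + v (2 * (i mod 5) + 1)"
    by simp
  finally show ?thesis .
qed

lemma digit_count_eq_matvec_power:
  assumes "j < 10"
  shows "int (digit_count (k + 1) j) = (matvec matA ^^ k) vecU j"
  using assms
proof (induction k arbitrary: j)
  case 0
  have "{i \<in> {0 + 1 + 1..0 + 1 + 2 ^ 0}. d i (0 + 1) = j} = (if j = 2 then {2} else {})"
    by (auto simp: d_def)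
  then show ?case by (simp add: digit_count_def vecU_def)
next
  case (Suc k)
  then show ?case
    using digit_count_recurrence[of j k] by (simp add: matvec_matA)
qed

theorem theorem10p2:
  fixes k :: nat
  assumes "k \<ge> 2"
  shows "(\<forall>n\<ge>k+1. d (n + 2^(k-1)) k = d n k)
    \<and> (\<forall>p. 0 < p \<and> p < 2^(k-1) \<longrightarrow> \<not> (\<forall>n\<ge>k+1. d (n + p) k = d n k))
    \<and> (\<forall>n\<ge>k+1. int (d (n + 2^(k-1) div 2) k) - int (d n k) \<in> {5, -5})
    \<and> (\<forall>j<10. int (card {i \<in> {k+1..k + 2^(k-1)}. d i k = j}) = ((matvec matA ^^ (k-1)) vecU) j)"
proof -
  obtain m where k: "k = m + 2"
    using assms le_Suc_ex by (metis add.commute)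
  have period: "d (n + 2 ^ (k - 1)) k = d n k" if "n \<ge> k + 1" for n
    using that d_period[of m n] by (simp add: k)
  have minimal: "\<not> (\<forall>n\<ge>k + 1. d (n + p) k = d n k)" if "0 < p" "p < 2 ^ (k - 1)" for p
    using that d_not_periodic_below[of p m] by (simp add: k periodic_from_def numeral_3_eq_3)
  have half: "int (d (n + 2 ^ (k - 1) div 2) k) - int (d n k) \<in> {5, -5}" if "n \<ge> k + 1" for n
    using that d_add_half_period[of m n] add_5_mod_10[OF d_less_10, of n k] by (simp add: k)
  have count: "int (card {i \<in> {k + 1..k + 2 ^ (k - 1)}. d i k = j}) = (matvec matA ^^ (k - 1)) vecU j"
    if "j < 10" for j
    using digit_count_eq_matvec_power[OF that, of "m + 1"] by (simp add: k digit_count_def)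
  show ?thesis
    using period minimal half count by blast
qed

end
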